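(* Let $\Sigma$ be a finite totally ordered alphabet, let $n\ge 1$ be an integer, and for every $c\in\Sigma$ let $n_c\ge 0$ be an integer, with $\sum_{c\in\Sigma}n_c=n-1$. Let $\mathcal U$ be the set of tries with $n$ nodes over $\Sigma$ in which, for every $c\in\Sigma$, exactly $n_c$ edges are labeled by $c$. Then $$|\mathcal U|=\frac{1}{n}\prod_{c\in\Sigma}\binom{n}{n_c}.$$
   Context: A trie (cardinal tree) over a finite totally ordered alphabet $\Sigma$ is a rooted ordered tree whose edges are labeled by symbols of $\Sigma$ such that (i) the labels of the edges leaving any node are pairwise distinct and (ii) siblings are ordered by the labels of their incoming edges. Two tries are the same if they are equal as edge-labeled rooted trees. *)

theory Defs
  imports Complex_Main
begin

text \<open>A trie (cardinal tree) over an alphabet: a rooted ordered tree whose edges carry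
labels.\<close>

datatype 'a trie = Node "('a \<times> 'a trie) list"

fun trie_wf :: "'a::linorder set \<Rightarrow> 'a trie \<Rightarrow> bool" where
  "trie_wf S (Node xs) =
     (sorted_wrt (<) (map fst xs) \<and> set (map fst xs) \<subseteq> S \<and>
      (\<forall>p \<in> set xs. trie_wf S (snd p)))"

fun trie_nodes :: "'a trie \<Rightarrow> nat" where
  "trie_nodes (Node xs) = 1 + sum_list (map (\<lambda>p. trie_nodes (snd p)) xs)"

fun trie_label_count :: "'a \<Rightarrow> 'a trie \<Rightarrow> nat" where
  "trie_label_count c (Node xs) =
     length (filter (\<lambda>p. fst p = c) xs) + sum_list (map (\<lambda>p. trie_label_count c (snd p)) xs)"

end

theory Submission
  imports Defs
begin

(* Count forests instead of single tries: the number of lists of k tries with N nodes in total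
   and m c edges labelled c is k/N * prod_c (N choose m c). Removing the root of the first trie,
   whose outgoing labels form a set A, leaves a forest of k - 1 + |A| tries with N - 1 nodes and
   one edge fewer of each label in A. Summing the induction hypothesis over A amounts to expanding
   prod_c ((N - 1 choose m c - 1) + (N - 1 choose m c)) = prod_c (N choose m c), once plainly and
   once with each term weighted by |A|. The theorem is the case k = 1. *)

lemma sum_Pow_card_mult_prod:
  fixes f g :: "'a \<Rightarrow> 'b::comm_semiring_1"
  assumes "finite S"
  shows "(\<Sum>X\<in>Pow S. of_nat (card X) * ((\<Prod>x\<in>X. f x) * (\<Prod>x\<in>S - X. g x)))
         = (\<Sum>x\<in>S. f x * (\<Prod>y\<in>S - {x}. f y + g y))"
proof -
  let ?w = "\<lambda>X. (\<Prod>x\<in>X. f x) * (\<Prod>x\<in>S - X. g x)"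
  have "(\<Sum>X\<in>Pow S. of_nat (card X) * ?w X) = (\<Sum>X\<in>Pow S. \<Sum>x\<in>{x\<in>S. x \<in> X}. ?w X)"
  proof (rule sum.cong[OF refl])
    fix X assume "X \<in> Pow S"
    then have "{x\<in>S. x \<in> X} = X" by blast
    then show "of_nat (card X) * ?w X = (\<Sum>x\<in>{x\<in>S. x \<in> X}. ?w X)" by simp
  qed
  also have "\<dots> = (\<Sum>x\<in>S. \<Sum>X\<in>{X\<in>Pow S. x \<in> X}. ?w X)"
    by (rule sum.swap_restrict) (use assms in simp_all)
  also have "\<dots> = (\<Sum>x\<in>S. f x * (\<Prod>y\<in>S - {x}. f y + g y))"
  proof (rule sum.cong[OF refl])
    fix x assume "x \<in> S"
    have "{X\<in>Pow S. x \<in> X} = insert x ` Pow (S - {x})"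
    proof (intro equalityI subsetI)
      fix X assume "X \<in> {X\<in>Pow S. x \<in> X}"
      then have "X = insert x (X - {x})" "X - {x} \<in> Pow (S - {x})" by auto
      then show "X \<in> insert x ` Pow (S - {x})" by (rule image_eqI)
    qed (use \<open>x \<in> S\<close> in auto)
    moreover have "inj_on (insert x) (Pow (S - {x}))"
      by (auto intro!: inj_onI)
    moreover have "?w (insert x Y) = f x * ((\<Prod>y\<in>Y. f y) * (\<Prod>y\<in>S - {x} - Y. g y))"
      if "Y \<in> Pow (S - {x})" for Y
    proof -
      have "finite Y" "x \<notin> Y" using that assms finite_subset by auto
      moreover have "S - insert x Y = S - {x} - Y" by blast
      ultimately show ?thesis by (simp add: mult.assoc)
    qed
    ultimately have "(\<Sum>X\<in>{X\<in>Pow S. x \<in> X}. ?w X)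
        = f x * (\<Sum>Y\<in>Pow (S - {x}). (\<Prod>y\<in>Y. f y) * (\<Prod>y\<in>S - {x} - Y. g y))"
      by (auto simp: sum.reindex sum_distrib_left intro!: sum.cong)
    also have "\<dots> = f x * (\<Prod>y\<in>S - {x}. f y + g y)"
      using assms by (simp add: prod_add)
    finally show "(\<Sum>X\<in>{X\<in>Pow S. x \<in> X}. ?w X) = f x * (\<Prod>y\<in>S - {x}. f y + g y)" .
  qed
  finally show ?thesis .
qed

lemma sum_Pow_affine_card_mult_prod:
  fixes f g :: "'a \<Rightarrow> 'b::comm_semiring_1"
  assumes "finite S"
  shows "(\<Sum>X\<in>Pow S. (k + of_nat (card X)) * ((\<Prod>x\<in>X. f x) * (\<Prod>x\<in>S - X. g x)))
         = k * (\<Prod>x\<in>S. f x + g x) + (\<Sum>x\<in>S. f x * (\<Prod>y\<in>S - {x}. f y + g y))"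
  unfolding distrib_right sum.distrib sum_Pow_card_mult_prod[OF assms] prod_add[OF assms]
  by (simp add: sum_distrib_left)

lemma prod_choose_diff_of_bool:
  assumes "finite S" "A \<subseteq> S"
  shows "(\<Prod>c\<in>S. N choose (m c - of_bool (c \<in> A)))
         = (\<Prod>c\<in>A. N choose (m c - 1)) * (\<Prod>c\<in>S - A. N choose m c)"
proof -
  have "(\<Prod>c\<in>S. N choose (m c - of_bool (c \<in> A)))
      = (\<Prod>c\<in>S - A. N choose (m c - of_bool (c \<in> A))) * (\<Prod>c\<in>A. N choose (m c - of_bool (c \<in> A)))"
    by (rule prod.subset_diff[OF assms(2,1)])
  also have "(\<Prod>c\<in>S - A. N choose (m c - of_bool (c \<in> A))) = (\<Prod>c\<in>S - A. N choose m c)"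
    by (rule prod.cong) auto
  also have "(\<Prod>c\<in>A. N choose (m c - of_bool (c \<in> A))) = (\<Prod>c\<in>A. N choose (m c - 1))"
    by (rule prod.cong) auto
  finally show ?thesis by (simp only: mult.commute)
qed

lemma sum_subsets_prod_choose:
  fixes m :: "'a \<Rightarrow> nat"
  assumes "finite S"
  shows "Suc N * (\<Sum>A\<in>{A. A \<subseteq> S \<and> (\<forall>c\<in>A. 0 < m c)}.
            (k + card A) * (\<Prod>c\<in>S. N choose (m c - of_bool (c \<in> A))))
         = (Suc N * k + (\<Sum>c\<in>S. m c)) * (\<Prod>c\<in>S. Suc N choose m c)"
    (is "Suc N * ?sum = _")
proof -
  \<comment> \<open>\<open>lo c\<close> is \<open>N choose (m c - 1)\<close>, but 0 when \<open>m c = 0\<close>: subsets containing such a \<open>c\<close>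
     are excluded on the left, so their weight must vanish.\<close>
  define lo where "lo c = (if m c = 0 then 0 else N choose (m c - 1))" for c
  let ?hi = "\<lambda>c. N choose m c"
  let ?B = "\<lambda>c. Suc N choose m c"
  let ?w = "\<lambda>A. (\<Prod>c\<in>A. lo c) * (\<Prod>c\<in>S - A. ?hi c)"
  have lo_hi: "lo c + ?hi c = ?B c" for c
    by (cases "m c") (simp_all add: lo_def)
  have Suc_N_lo: "Suc N * lo c = m c * ?B c" for c
  proof (cases "m c")
    case (Suc j)
    then show ?thesis using Suc_times_binomial[of j N]
      by (simp add: lo_def del: binomial_Suc_Suc mult_Suc)
  qed (simp add: lo_def)
  have weight: "(\<Prod>c\<in>S. N choose (m c - of_bool (c \<in> A))) = ?w A"
    if "A \<subseteq> S" "\<forall>c\<in>A. 0 < m c" for A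
  proof -
    have "(\<Prod>c\<in>A. N choose (m c - 1)) = (\<Prod>c\<in>A. lo c)"
      using that(2) by (intro prod.cong) (auto simp: lo_def)
    then show ?thesis unfolding prod_choose_diff_of_bool[OF assms that(1)] by simp
  qed
  have vanish: "?w A = 0" if A: "A \<subseteq> S" "\<not> (\<forall>c\<in>A. 0 < m c)" for A
  proof -
    obtain c where "c \<in> A" "m c = 0" using A(2) by blast
    then have "(\<Prod>c\<in>A. lo c) = 0"
      using finite_subset[OF A(1) assms] by (intro prod_zero bexI[of _ c]) (simp_all add: lo_def)
    then show ?thesis by simp
  qed
  have "?sum = (\<Sum>A\<in>Pow S. (k + card A) * ?w A)"
    by (rule sum.mono_neutral_cong_left) (use assms weight vanish in auto)
  also have "\<dots> = k * (\<Prod>c\<in>S. ?B c) + (\<Sum>c\<in>S. lo c * (\<Prod>d\<in>S - {c}. ?B d))"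
    using sum_Pow_affine_card_mult_prod[OF assms, of k lo ?hi] by (simp add: lo_hi)
  finally have "Suc N * ?sum
      = Suc N * k * (\<Prod>c\<in>S. ?B c) + (\<Sum>c\<in>S. Suc N * lo c * (\<Prod>d\<in>S - {c}. ?B d))"
    by (simp add: algebra_simps sum_distrib_left)
  also have "(\<Sum>c\<in>S. Suc N * lo c * (\<Prod>d\<in>S - {c}. ?B d)) = (\<Sum>c\<in>S. m c * (\<Prod>d\<in>S. ?B d))"
  proof (rule sum.cong[OF refl])
    fix c assume "c \<in> S"
    then show "Suc N * lo c * (\<Prod>d\<in>S - {c}. ?B d) = m c * (\<Prod>d\<in>S. ?B d)"
      unfolding Suc_N_lo prod.remove[OF assms \<open>c \<in> S\<close>] by (simp only: mult.assoc)
  qed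
  finally show ?thesis by (simp add: algebra_simps sum_distrib_right)
qed

lemma of_bool_add_eq_iff:
  fixes r m :: "'a \<Rightarrow> nat"
  assumes "A \<subseteq> S"
  shows "(\<forall>c\<in>S. of_bool (c \<in> A) + r c = m c) \<longleftrightarrow>
    (\<forall>c\<in>A. 0 < m c) \<and> (\<forall>c\<in>S. r c = m c - of_bool (c \<in> A))"
  using assms by (fastforce split: if_splits)

lemma sum_diff_of_bool:
  fixes m :: "'a \<Rightarrow> nat"
  assumes "finite S" "A \<subseteq> S" "\<forall>c\<in>A. 0 < m c"
  shows "(\<Sum>c\<in>S. m c - of_bool (c \<in> A)) + card A = (\<Sum>c\<in>S. m c)"
proof -
  have "(\<Sum>c\<in>S. m c - of_bool (c \<in> A)) + card A = (\<Sum>c\<in>S. m c - of_bool (c \<in> A) + of_bool (c \<in> A))"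
    using assms(1,2) by (simp add: sum.distrib Int_absorb1)
  also have "\<dots> = (\<Sum>c\<in>S. m c)"
    using assms(3) by (intro sum.cong) auto
  finally show ?thesis .
qed

lemma length_filter_fst_eq:
  "distinct (map fst xs) \<Longrightarrow> length (filter (\<lambda>p. fst p = c) xs) = of_bool (c \<in> fst ` set xs)"
  by (induction xs) auto

definition trie_forests :: "'a::linorder set \<Rightarrow> nat \<Rightarrow> nat \<Rightarrow> ('a \<Rightarrow> nat) \<Rightarrow> 'a trie list set" where
  "trie_forests S k N m = {ts. length ts = k \<and> (\<forall>t\<in>set ts. trie_wf S t) \<and>
     sum_list (map trie_nodes ts) = N \<and> (\<forall>c\<in>S. sum_list (map (trie_label_count c) ts) = m c)}"

lemma sum_trie_label_count_Cons_Node: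
  fixes xs :: "('a::linorder \<times> 'a trie) list"
  assumes "sorted_wrt (<) (map fst xs)"
  shows "sum_list (map (trie_label_count c) (Node xs # ts)) =
      of_bool (c \<in> fst ` set xs) + sum_list (map (trie_label_count c) (map snd xs @ ts))"
proof -
  have "distinct (map fst xs)" using assms by (simp add: strict_sorted_iff)
  then show ?thesis by (simp add: length_filter_fst_eq o_def)
qed

lemma Cons_Node_in_trie_forests_iff:
  "Node xs # ts \<in> trie_forests S (Suc k) (Suc N) m \<longleftrightarrow>
     sorted_wrt (<) (map fst xs) \<and> fst ` set xs \<subseteq> S \<and> (\<forall>c\<in>fst ` set xs. 0 < m c) \<and>
     map snd xs @ ts \<in> trie_forests S (k + length xs) N (\<lambda>c. m c - of_bool (c \<in> fst ` set xs))"
  (is "?lhs \<longleftrightarrow> ?sorted \<and> ?labels \<and> ?pos \<and> ?rest")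
proof -
  let ?us = "map snd xs @ ts"
  let ?A = "fst ` set xs"
  let ?forest = "length ?us = k + length xs \<and> (\<forall>t\<in>set ?us. trie_wf S t) \<and>
    sum_list (map trie_nodes ?us) = N"
  have "?lhs \<longleftrightarrow> ?sorted \<and> ?labels \<and> ?forest \<and>
      (\<forall>c\<in>S. sum_list (map (trie_label_count c) (Node xs # ts)) = m c)"
    by (auto simp: trie_forests_def o_def)
  also have "\<dots> \<longleftrightarrow> ?sorted \<and> ?labels \<and> ?forest \<and>
      (\<forall>c\<in>S. of_bool (c \<in> ?A) + sum_list (map (trie_label_count c) ?us) = m c)"
    by (intro conj_cong refl ball_cong) (simp only: sum_trie_label_count_Cons_Node)
  also have "\<dots> \<longleftrightarrow> ?sorted \<and> ?labels \<and> ?forest \<and>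
      ?pos \<and> (\<forall>c\<in>S. sum_list (map (trie_label_count c) ?us) = m c - of_bool (c \<in> ?A))"
    by (intro conj_cong refl of_bool_add_eq_iff) assumption
  also have "\<dots> \<longleftrightarrow> ?sorted \<and> ?labels \<and> ?pos \<and> ?rest"
    unfolding trie_forests_def by blast
  finally show ?thesis .
qed

lemma trie_forests_0_0: "(\<forall>c\<in>S. m c = 0) \<Longrightarrow> trie_forests S 0 0 m = {[]}"
  by (auto simp: trie_forests_def)

lemma trie_forests_0_Suc: "trie_forests S 0 (Suc N) m = {}"
  by (auto simp: trie_forests_def)

lemma trie_forests_no_nodes_subset: "trie_forests S k 0 m \<subseteq> {[]}"
proof
  fix ts assume "ts \<in> trie_forests S k 0 m"
  then have "\<forall>t\<in>set ts. trie_nodes t = 0" by (auto simp: trie_forests_def sum_list_eq_0_iff)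
  moreover have "trie_nodes t \<noteq> 0" for t :: "'a trie" by (cases t) simp
  ultimately show "ts \<in> {[]}" by (cases ts) auto
qed

definition graft_root :: "'a::linorder set \<Rightarrow> 'a trie list \<Rightarrow> 'a trie list" where
  "graft_root A ts = Node (zip (sorted_list_of_set A) (take (card A) ts)) # drop (card A) ts"

lemma graft_root_eq_Cons_Node:
  assumes "finite A" "card A \<le> length us"
  obtains xs where "graft_root A us = Node xs # drop (card A) us"
    and "map fst xs = sorted_list_of_set A" "map snd xs = take (card A) us"
  using assms by (simp add: graft_root_def)

lemma graft_root_inj:
  assumes "finite A" "finite B" "card A \<le> length us" "card B \<le> length vs"
    and "graft_root A us = graft_root B vs"
  shows "A = B \<and> us = vs"
proof -
  obtain xs where xs: "graft_root A us = Node xs # drop (card A) us"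
    "map fst xs = sorted_list_of_set A" "map snd xs = take (card A) us"
    using graft_root_eq_Cons_Node[OF assms(1,3)] .
  obtain ys where ys: "graft_root B vs = Node ys # drop (card B) vs"
    "map fst ys = sorted_list_of_set B" "map snd ys = take (card B) vs"
    using graft_root_eq_Cons_Node[OF assms(2,4)] .
  have "xs = ys" "drop (card A) us = drop (card B) vs" using xs(1) ys(1) assms(5) by auto
  then have "A = B" using xs(2) ys(2) assms(1,2) sorted_list_of_set_inject by metis
  then show ?thesis using xs ys \<open>xs = ys\<close> \<open>drop (card A) us = drop (card B) vs\<close>
    by (metis append_take_drop_id)
qed

lemma trie_forests_Suc_Suc:
  assumes "finite S"
  shows "trie_forests S (Suc k) (Suc N) m =
    (\<Union>A\<in>{A. A \<subseteq> S \<and> (\<forall>c\<in>A. 0 < m c)}.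
      graft_root A ` trie_forests S (k + card A) N (\<lambda>c. m c - of_bool (c \<in> A)))"
proof (intro equalityI subsetI)
  fix ts assume ts: "ts \<in> trie_forests S (Suc k) (Suc N) m"
  then obtain t rest where "ts = t # rest" by (auto simp: trie_forests_def length_Suc_conv)
  then obtain xs where ts_eq: "ts = Node xs # rest" by (cases t) simp
  let ?A = "fst ` set xs"
  have sorted: "sorted_wrt (<) (map fst xs)" and A: "?A \<subseteq> S" "\<forall>c\<in>?A. 0 < m c"
    and rest: "map snd xs @ rest \<in> trie_forests S (k + length xs) N (\<lambda>c. m c - of_bool (c \<in> ?A))"
    using ts unfolding ts_eq Cons_Node_in_trie_forests_iff by blast+
  have "sorted (map fst xs)" "distinct (map fst xs)" using sorted by (simp_all add: strict_sorted_iff)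
  then have "sorted_list_of_set ?A = map fst xs" and card: "card ?A = length xs"
    using sorted_list_of_set.idem_if_sorted_distinct[of "map fst xs"] distinct_card[of "map fst xs"]
    by simp_all
  then have "graft_root ?A (map snd xs @ rest) = ts"
    by (simp add: graft_root_def ts_eq zip_map_fst_snd)
  then have "ts \<in> graft_root ?A ` trie_forests S (k + card ?A) N (\<lambda>c. m c - of_bool (c \<in> ?A))"
    using rest unfolding card by (rule image_eqI[OF sym])
  then show "ts \<in> (\<Union>A\<in>{A. A \<subseteq> S \<and> (\<forall>c\<in>A. 0 < m c)}.
      graft_root A ` trie_forests S (k + card A) N (\<lambda>c. m c - of_bool (c \<in> A)))"
    using A by blast
next
  fix ts assume "ts \<in> (\<Union>A\<in>{A. A \<subseteq> S \<and> (\<forall>c\<in>A. 0 < m c)}.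
      graft_root A ` trie_forests S (k + card A) N (\<lambda>c. m c - of_bool (c \<in> A)))"
  then obtain A us where A: "A \<subseteq> S" "\<forall>c\<in>A. 0 < m c" and ts: "ts = graft_root A us"
    and us: "us \<in> trie_forests S (k + card A) N (\<lambda>c. m c - of_bool (c \<in> A))"
    by blast
  have "finite A" using A(1) assms finite_subset by blast
  moreover have "length us = k + card A" using us by (simp add: trie_forests_def)
  ultimately obtain xs where xs: "ts = Node xs # drop (card A) us"
    "map fst xs = sorted_list_of_set A" "map snd xs = take (card A) us"
    using graft_root_eq_Cons_Node ts by (metis le_add2)
  have A_eq: "fst ` set xs = A" using arg_cong[OF xs(2), of set] \<open>finite A\<close> by simp
  have len: "length xs = card A" using arg_cong[OF xs(2), of length] by simp
  have us_eq: "map snd xs @ drop (card A) us = us" using xs(3) by simp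
  have "sorted_wrt (<) (map fst xs)" using xs(2) by simp
  then show "ts \<in> trie_forests S (Suc k) (Suc N) m"
    unfolding xs(1) Cons_Node_in_trie_forests_iff A_eq len us_eq using A us by blast
qed

lemma finite_trie_forests:
  assumes "finite S"
  shows "finite (trie_forests S k N m)"
proof (induction N arbitrary: k m)
  case 0
  show ?case by (rule finite_subset[OF trie_forests_no_nodes_subset]) simp
next
  case (Suc N)
  show ?case
  proof (cases k)
    case 0
    then show ?thesis by (simp add: trie_forests_0_Suc)
  next
    case (Suc k')
    have "finite {A. A \<subseteq> S \<and> (\<forall>c\<in>A. 0 < m c)}" using assms by simp
    then show ?thesis
      unfolding Suc trie_forests_Suc_Suc[OF assms] by (intro finite_UN_I finite_imageI Suc.IH)
  qed
qed

lemma card_trie_forests_Suc_Suc: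
  assumes "finite S"
  shows "card (trie_forests S (Suc k) (Suc N) m) =
    (\<Sum>A\<in>{A. A \<subseteq> S \<and> (\<forall>c\<in>A. 0 < m c)}.
      card (trie_forests S (k + card A) N (\<lambda>c. m c - of_bool (c \<in> A))))"
proof -
  let ?I = "{A. A \<subseteq> S \<and> (\<forall>c\<in>A. 0 < m c)}"
  let ?F = "\<lambda>A. trie_forests S (k + card A) N (\<lambda>c. m c - of_bool (c \<in> A))"
  have finite_I: "A \<in> ?I \<Longrightarrow> finite A" for A using assms finite_subset by blast
  have length_F: "us \<in> ?F A \<Longrightarrow> card A \<le> length us" for A us
    by (simp add: trie_forests_def)
  have "card (\<Union>A\<in>?I. graft_root A ` ?F A) = (\<Sum>A\<in>?I. card (graft_root A ` ?F A))"
  proof (rule card_UN_disjoint)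
    show "finite ?I" using assms by simp
    show "\<forall>A\<in>?I. finite (graft_root A ` ?F A)" using finite_trie_forests[OF assms] by blast
    show "\<forall>A\<in>?I. \<forall>B\<in>?I. A \<noteq> B \<longrightarrow> graft_root A ` ?F A \<inter> graft_root B ` ?F B = {}"
    proof (intro ballI impI)
      fix A B assume "A \<in> ?I" "B \<in> ?I" "A \<noteq> B"
      then show "graft_root A ` ?F A \<inter> graft_root B ` ?F B = {}"
        using graft_root_inj[OF finite_I finite_I length_F length_F] by blast
    qed
  qed
  also have "\<dots> = (\<Sum>A\<in>?I. card (?F A))"
  proof (rule sum.cong[OF refl])
    fix A assume "A \<in> ?I"
    then have "inj_on (graft_root A) (?F A)"
      using graft_root_inj[OF finite_I finite_I length_F length_F] by (blast intro: inj_onI)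
    then show "card (graft_root A ` ?F A) = card (?F A)" by (rule card_image)
  qed
  finally show ?thesis unfolding trie_forests_Suc_Suc[OF assms] .
qed

lemma card_trie_forests:
  assumes "finite S" "(\<Sum>c\<in>S. m c) + k = N"
  shows "N * card (trie_forests S k N m) = k * (\<Prod>c\<in>S. N choose m c)"
  using assms(2)
proof (induction N arbitrary: k m)
  case 0
  then show ?case by simp
next
  case (Suc N)
  show ?case
  proof (cases k)
    case 0
    then show ?thesis by (simp add: trie_forests_0_Suc)
  next
    case (Suc k')
    let ?I = "{A. A \<subseteq> S \<and> (\<forall>c\<in>A. 0 < m c)}"
    let ?m = "\<lambda>A c. m c - of_bool (c \<in> A)"
    have card_rec:
      "card (trie_forests S k (Suc N) m) = (\<Sum>A\<in>?I. card (trie_forests S (k' + card A) N (?m A)))"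
      unfolding Suc by (rule card_trie_forests_Suc_Suc[OF assms(1)])
    show ?thesis
    proof (cases "N = 0")
      case True
      then have "k' = 0" "\<forall>c\<in>S. m c = 0" using Suc.prems Suc assms(1) by auto
      then have "?I = {{}}" by fastforce
      then show ?thesis
        using card_rec \<open>N = 0\<close> \<open>k' = 0\<close> \<open>\<forall>c\<in>S. m c = 0\<close> Suc by (simp add: trie_forests_0_0)
    next
      case False
      have IH: "N * card (trie_forests S (k' + card A) N (?m A))
          = (k' + card A) * (\<Prod>c\<in>S. N choose ?m A c)" if "A \<in> ?I" for A
        using Suc.prems Suc sum_diff_of_bool[OF assms(1), of A m] that by (intro Suc.IH) auto
      have "Suc N * (N * card (trie_forests S k (Suc N) m))
          = Suc N * (\<Sum>A\<in>?I. (k' + card A) * (\<Prod>c\<in>S. N choose ?m A c))"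
        unfolding card_rec sum_distrib_left by (simp add: IH)
      also have "\<dots> = (Suc N * k' + (\<Sum>c\<in>S. m c)) * (\<Prod>c\<in>S. Suc N choose m c)"
        by (rule sum_subsets_prod_choose[OF assms(1)])
      also have "Suc N * k' + (\<Sum>c\<in>S. m c) = N * k"
        using Suc.prems Suc by (simp add: algebra_simps)
      finally have "N * (Suc N * card (trie_forests S k (Suc N) m))
          = N * (k * (\<Prod>c\<in>S. Suc N choose m c))"
        by (simp add: ac_simps)
      then show ?thesis using False by simp
    qed
  qed
qed

theorem theorem1:
  fixes S :: "'a::linorder set" and n :: nat and nc :: "'a \<Rightarrow> nat"
  assumes "finite S" and "n \<ge> 1"
    and "(\<Sum>c\<in>S. nc c) = n - 1"
  shows "real (card {t. trie_wf S t \<and> trie_nodes t = n \<and>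
                          (\<forall>c\<in>S. trie_label_count c t = nc c)})
         = (1 / real n) * (\<Prod>c\<in>S. real (n choose nc c))"
proof -
  let ?U = "{t. trie_wf S t \<and> trie_nodes t = n \<and> (\<forall>c\<in>S. trie_label_count c t = nc c)}"
  have "trie_forests S 1 n nc = (\<lambda>t. [t]) ` ?U"
    by (auto simp: trie_forests_def length_Suc_conv)
  moreover have "inj_on (\<lambda>t. [t]) ?U" by (rule inj_onI) simp
  ultimately have card_eq: "card (trie_forests S 1 n nc) = card ?U" by (simp add: card_image)
  have "(\<Sum>c\<in>S. nc c) + 1 = n" using assms(2,3) by simp
  then have "n * card (trie_forests S 1 n nc) = 1 * (\<Prod>c\<in>S. n choose nc c)"
    by (rule card_trie_forests[OF assms(1)])
  then have "real (n * card ?U) = real (\<Prod>c\<in>S. n choose nc c)"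
    unfolding card_eq by simp
  then show ?thesis using assms(2) by (simp add: field_simps)
qed

end
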